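(* Let $S=s_1,\ldots,s_n$ be a sequence of positive real numbers, $\gamma>0$, $k$ a positive integer and $\epsilon>0$, and let $\Omega=\max_i s_i$ and $\omega=\min_i s_i$. The computational complexity of $\textit{ApproxExp}(S,\gamma,k,\epsilon)$ is $O(\epsilon^{-2}nk^3\log^2(\Omega/\omega))$.
   Context: A level sequence is $L=\ell_1,\ldots,\ell_n$ of integers with $0\le\ell_i\le k$; set $\ell_0=0$. The penalty is $\mathrm{pen}(x,y)=\max(y-x,0)\,\gamma\log n$; $p_{\exp}(s;\lambda)=\lambda e^{-\lambda s}$; $\mathrm{score}_{\exp}(L,S;\alpha,\beta,\gamma)=\sum_{i=1}^n\big[-\log p_{\exp}(s_i;\beta\alpha^{\ell_i})+\mathrm{pen}(\ell_{i-1},\ell_i)\big]$. $\textit{Viterbi}(S,\alpha,\beta,\gamma,k,p_{\exp})$ is a dynamic program returning a level sequence minimizing this score for fixed $\alpha,\beta$ in $O(nk)$ time. Algorithm $\textit{ExpAlpha}(S,\alpha,\gamma,k,\epsilon)$: let $\mu=\frac1n\sum_i s_i$ and $\beta=1/\mu$; while $\beta\ge1/(\alpha^k\mu)$: run $\textit{Viterbi}(S,\alpha,\beta,\gamma,k,p_{\exp})$ and set $\beta\leftarrow\beta/(1+\epsilon)$; return the best tested $(L,\beta)$. Algorithm $\textit{ApproxExp}(S,\gamma,k,\epsilon)$: let $\alpha=(\max_i s_i)/(\min_i s_i)$ and $c=(1+\epsilon)^{1/(2k)}$; while $\alpha\ge1$: run $\textit{ExpAlpha}(S,\alpha,\gamma,k,\epsilon/2)$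 and set $\alpha\leftarrow\alpha/c$. Return the best observed solution. *)

theory Defs
  imports Complex_Main
begin

text \<open>Cost model for the algorithms ApproxExp / ExpAlpha / Viterbi.
  One call of Viterbi with k levels (levels 0..k) costs n*(k+1) unit steps (O(nk)).\<close>

definition viterbi_cost :: "nat \<Rightarrow> nat \<Rightarrow> real" where
  "viterbi_cost n k = real n * (real k + 1)"

text \<open>Number of iterations of the loop
  "x := x0; while x \<ge> t do (body; x := x / r)": the body is executed
  exactly for the values x0 / r^j that are \<ge> t (these form an initial segment
  of the indices j, since r > 1).\<close>

definition loop_iters :: "real \<Rightarrow> real \<Rightarrow> real \<Rightarrow> nat" where
  "loop_iters x0 r t = card {j::nat. t \<le> x0 / r ^ j}"

definition mean :: "real list \<Rightarrow> real" where
  "mean S = sum_list S / real (length S)"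

text \<open>ExpAlpha(S, alpha, gamma, k, eps): computing mu costs n; each loop
  iteration runs Viterbi once plus O(1) bookkeeping (update beta, compare with best).\<close>

definition expalpha_cost :: "real list \<Rightarrow> real \<Rightarrow> nat \<Rightarrow> real \<Rightarrow> real" where
  "expalpha_cost S \<alpha> k \<epsilon> =
     real (length S) +
     real (loop_iters (1 / mean S) (1 + \<epsilon>) (1 / (\<alpha> ^ k * mean S)))
       * (viterbi_cost (length S) k + 1)"

text \<open>ApproxExp(S, gamma, k, eps): computing max and min costs 2n; the
  outer loop starts at alpha0 = max/min and divides by c = (1+eps)^(1/(2k))
  while alpha \<ge> 1; each iteration runs ExpAlpha with eps/2 plus O(1) bookkeeping.\<close>

definition approxexp_cost :: "real list \<Rightarrow> nat \<Rightarrow> real \<Rightarrow> real" where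
  "approxexp_cost S k \<epsilon> =
     (let \<alpha>0 = Max (set S) / Min (set S);
          c = (1 + \<epsilon>) powr (1 / (2 * real k))
      in 2 * real (length S) +
         (\<Sum>j\<in>{j::nat. 1 \<le> \<alpha>0 / c ^ j}. expalpha_cost S (\<alpha>0 / c ^ j) k (\<epsilon> / 2) + 1))"

end

theory Submission
  imports Defs
begin

text \<open>A loop that divides its variable by \<open>r > 1\<close> until it drops below \<open>t\<close> runs at most
  \<open>log\<^sub>r (x\<^sub>0 / t) + 1\<close> times. The inner loop of ExpAlpha thus runs
  \<open>O(k log \<alpha> / \<epsilon>)\<close> times, and since \<open>ln c = ln (1 + \<epsilon>) / (2k) \<ge> \<epsilon> / (4k)\<close> the outer loop
  of ApproxExp runs \<open>O(k log (\<Omega>/\<omega>) / \<epsilon>)\<close> times. Multiplying by the \<open>O(nk)\<close> cost of one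
  Viterbi call gives the bound; the factor \<open>max 1\<close> absorbs the additive constants.\<close>

lemma ln_one_plus_ge_divide:
  fixes x :: real
  assumes "-1 < x"
  shows "x / (1 + x) \<le> ln (1 + x)"
proof -
  have "ln (1 / (1 + x)) \<le> 1 / (1 + x) - 1"
    using assms by (intro ln_le_minus_one) simp
  then show ?thesis
    using assms by (simp add: ln_div field_simps)
qed

lemma ln_one_plus_ge_half:
  fixes x :: real
  assumes "0 \<le> x" "x \<le> 1"
  shows "x / 2 \<le> ln (1 + x)"
proof -
  have "x / 2 \<le> x / (1 + x)"
    using assms by (intro divide_left_mono) auto
  with ln_one_plus_ge_divide[of x] assms show ?thesis
    by linarith
qed

lemma loop_iters_le:
  assumes r: "1 < r" and t: "0 < t" "t \<le> x0"
  shows "real (loop_iters x0 r t) \<le> ln (x0 / t) / ln r + 1"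
proof -
  define B where "B = ln (x0 / t) / ln r"
  have B_nonneg: "0 \<le> B"
    using r t by (simp add: B_def)
  have "{j. t \<le> x0 / r ^ j} \<subseteq> {..nat \<lfloor>B\<rfloor>}"
  proof
    fix j assume "j \<in> {j. t \<le> x0 / r ^ j}"
    then have "r ^ j \<le> x0 / t"
      using r t by (simp add: field_simps)
    then have "real j * ln r \<le> ln (x0 / t)"
      using r t by (simp add: ln_realpow[symmetric])
    then have "real j \<le> B"
      using r by (simp add: B_def pos_le_divide_eq)
    then show "j \<in> {..nat \<lfloor>B\<rfloor>}"
      by (simp add: le_nat_floor)
  qed
  then have "loop_iters x0 r t \<le> Suc (nat \<lfloor>B\<rfloor>)"
    unfolding loop_iters_def by (metis card_atMost card_mono finite_atMost)
  then show ?thesis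
    using B_nonneg by (simp add: B_def[symmetric]) linarith
qed

lemma mean_pos:
  assumes "S \<noteq> []" "\<forall>s\<in>set S. 0 < s"
  shows "0 < mean S"
proof -
  obtain s where s: "s \<in> set S"
    using assms(1) by (meson list.set_sel(1))
  then have "s \<le> sum_list S"
    using assms(2) by (intro member_le_sum_list) auto
  then show ?thesis
    unfolding mean_def using s assms by force
qed

lemma expalpha_cost_le:
  assumes \<mu>: "0 < mean S" and \<alpha>: "1 \<le> \<alpha>" and \<epsilon>: "0 < \<epsilon>" "\<epsilon> \<le> 1"
  shows "expalpha_cost S \<alpha> k \<epsilon>
    \<le> real (length S) + (2 * real k * ln \<alpha> / \<epsilon> + 1) * (viterbi_cost (length S) k + 1)"
proof -
  have "(1 / mean S) / (1 / (\<alpha> ^ k * mean S)) = \<alpha> ^ k"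
    using \<mu> \<alpha> by simp
  then have "real (loop_iters (1 / mean S) (1 + \<epsilon>) (1 / (\<alpha> ^ k * mean S)))
      \<le> ln (\<alpha> ^ k) / ln (1 + \<epsilon>) + 1"
    using loop_iters_le[of "1 + \<epsilon>" "1 / (\<alpha> ^ k * mean S)" "1 / mean S"] \<mu> \<alpha> \<epsilon>
    by (simp add: field_simps one_le_power)
  also have "ln (\<alpha> ^ k) / ln (1 + \<epsilon>) \<le> real k * ln \<alpha> / (\<epsilon> / 2)"
    unfolding ln_realpow
    using \<alpha> \<epsilon> ln_one_plus_ge_half[of \<epsilon>] by (intro divide_left_mono) auto
  finally show ?thesis
    unfolding expalpha_cost_def viterbi_cost_def
    by (intro add_left_mono mult_right_mono) (auto simp: field_simps)
qed

lemma approxexp_cost_le: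
  assumes S: "S \<noteq> []" "\<forall>s\<in>set S. 0 < s" and k: "1 \<le> k" and \<epsilon>: "0 < \<epsilon>" "\<epsilon> \<le> 1"
  defines "I \<equiv> 4 * real k * ln (Max (set S) / Min (set S)) / \<epsilon> + 1"
  shows "approxexp_cost S k \<epsilon>
    \<le> 2 * real (length S) + I * (real (length S) + I * (viterbi_cost (length S) k + 1) + 1)"
proof -
  define a0 where "a0 = Max (set S) / Min (set S)"
  define c where "c = (1 + \<epsilon>) powr (1 / (2 * real k))"
  define E where "E = (\<lambda>\<alpha>. expalpha_cost S \<alpha> k (\<epsilon> / 2) + 1)"
  define V where "V = viterbi_cost (length S) k + 1"
  have "0 < Min (set S)" "Min (set S) \<le> Max (set S)"
    using S by (simp_all add: Max_ge Min_in)
  then have a0: "1 \<le> a0"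
    by (simp add: a0_def)
  have I: "I = 4 * real k * ln a0 / \<epsilon> + 1"
    by (simp add: I_def a0_def)
  have "\<epsilon> / 2 / (2 * real k) \<le> ln (1 + \<epsilon>) / (2 * real k)"
    using ln_one_plus_ge_half[of \<epsilon>] \<epsilon> by (intro divide_right_mono) auto
  also have "\<dots> = ln c"
    using \<epsilon> by (simp add: c_def ln_powr)
  finally have ln_c: "\<epsilon> / 2 / (2 * real k) \<le> ln c" .
  have c: "1 < c"
    using \<epsilon> k by (simp add: c_def)
  have "ln a0 / ln c \<le> ln a0 / (\<epsilon> / 2 / (2 * real k))"
    using ln_c a0 c \<epsilon> k by (intro divide_left_mono) (auto intro!: mult_pos_pos)
  also have "\<dots> = 4 * real k * ln a0 / \<epsilon>"
    by simp
  finally have card: "real (loop_iters a0 c 1) \<le> I"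
    using loop_iters_le[OF c, of 1 a0] a0 unfolding I by simp
  have E_le: "E (a0 / c ^ j) \<le> real (length S) + I * V + 1" if j: "1 \<le> a0 / c ^ j" for j
  proof -
    have "a0 / c ^ j \<le> a0"
      using a0 c by (simp add: divide_le_eq)
    then have "ln (a0 / c ^ j) \<le> ln a0"
      using j by simp
    then have "4 * real k * ln (a0 / c ^ j) / \<epsilon> + 1 \<le> I"
      using \<epsilon> unfolding I by (intro add_right_mono divide_right_mono mult_left_mono) auto
    then have "(2 * real k * ln (a0 / c ^ j) / (\<epsilon> / 2) + 1) * V \<le> I * V"
      by (intro mult_right_mono) (auto simp: V_def viterbi_cost_def)
    with expalpha_cost_le[OF mean_pos[OF S] j, of "\<epsilon> / 2" k] \<epsilon> show ?thesis
      by (simp add: E_def V_def)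
  qed
  have "(\<Sum>j\<in>{j. 1 \<le> a0 / c ^ j}. E (a0 / c ^ j))
      \<le> real (loop_iters a0 c 1) * (real (length S) + I * V + 1)"
    unfolding loop_iters_def using E_le by (intro sum_bounded_above) auto
  also have "\<dots> \<le> I * (real (length S) + I * V + 1)"
    using card by (intro mult_right_mono) (auto simp: V_def viterbi_cost_def)
  finally show ?thesis
    by (simp add: approxexp_cost_def Let_def a0_def c_def E_def V_def)
qed

lemma approxexp_cost_polynomial_le:
  fixes n K P I :: real
  assumes n: "1 \<le> n" and K: "1 \<le> K" and P: "1 \<le> P" and I: "0 \<le> I" "I \<le> 5 * P"
  shows "2 * n + I * (n + I * (n * (K + 1) + 1) + 1) \<le> 87 * (n * K * P\<^sup>2)"
proof -
  have "1 * 1 \<le> n * K"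
    using n K by (intro mult_mono) auto
  then have nK: "n \<le> n * K" "1 \<le> n * K"
    using n mult_left_mono[OF K, of n] by auto
  have nKP: "n * K \<le> n * K * P" "n * K * P \<le> n * K * P\<^sup>2"
    using nK P mult_left_mono[OF P, of "n * K"] mult_left_mono[OF P, of "n * K * P"]
    by (auto simp: power2_eq_square mult.assoc)
  have V: "0 \<le> n * (K + 1) + 1" "n * (K + 1) + 1 \<le> 3 * (n * K)"
    using n K by simp (use nK in \<open>simp add: algebra_simps\<close>)
  then have "I * (n * (K + 1) + 1) \<le> 5 * P * (3 * (n * K))"
    using I P V by (intro mult_mono) auto
  then have "n + I * (n * (K + 1) + 1) + 1 \<le> 17 * (n * K * P)"
    using nK nKP by (simp add: algebra_simps)
  then have "I * (n + I * (n * (K + 1) + 1) + 1) \<le> 5 * P * (17 * (n * K * P))"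
    using I P n V by (intro mult_mono) auto
  then show ?thesis
    using nK nKP by (simp add: power2_eq_square algebra_simps)
qed

theorem proposition9:
  "\<exists>C>0. \<forall>(S::real list) (k::nat) (\<epsilon>::real).
      S \<noteq> [] \<and> (\<forall>s\<in>set S. 0 < s) \<and> 1 \<le> k \<and> 0 < \<epsilon> \<and> \<epsilon> \<le> 1 \<longrightarrow>
      approxexp_cost S k \<epsilon>
        \<le> C * (real (length S) * real k ^ 3 / \<epsilon> ^ 2)
             * (max 1 (ln (Max (set S) / Min (set S)))) ^ 2"
proof (intro exI[of _ 87] conjI allI impI)
  fix S :: "real list" and k :: nat and \<epsilon> :: real
  assume "S \<noteq> [] \<and> (\<forall>s\<in>set S. 0 < s) \<and> 1 \<le> k \<and> 0 < \<epsilon> \<and> \<epsilon> \<le> 1"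
  then have S: "S \<noteq> []" "\<forall>s\<in>set S. 0 < s" and k: "1 \<le> k" and \<epsilon>: "0 < \<epsilon>" "\<epsilon> \<le> 1"
    by auto
  define L where "L = ln (Max (set S) / Min (set S))"
  define P where "P = real k * max 1 L / \<epsilon>"
  have "0 \<le> L"
    using S by (simp add: L_def Max_ge Min_in)
  have "1 * 1 \<le> real k * max 1 L"
    using k by (intro mult_mono) auto
  then have "1 \<le> P"
    using \<epsilon> by (simp add: P_def field_simps)
  have "real k * L / \<epsilon> \<le> P"
    unfolding P_def using \<epsilon> by (intro divide_right_mono mult_left_mono) auto
  then have I_le: "4 * real k * L / \<epsilon> + 1 \<le> 5 * P"
    using \<open>1 \<le> P\<close> by simp
  have "approxexp_cost S k \<epsilon>
      \<le> 2 * real (length S) + (4 * real k * L / \<epsilon> + 1)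
           * (real (length S) + (4 * real k * L / \<epsilon> + 1) * (viterbi_cost (length S) k + 1) + 1)"
    using approxexp_cost_le[OF S k \<epsilon>] by (simp add: L_def)
  also have "\<dots> \<le> 87 * (real (length S) * real k * P\<^sup>2)"
    unfolding viterbi_cost_def
    using S k \<open>1 \<le> P\<close> \<open>0 \<le> L\<close> \<epsilon> I_le
    by (intro approxexp_cost_polynomial_le) (auto simp: Suc_le_eq)
  also have "\<dots> = 87 * (real (length S) * real k ^ 3 / \<epsilon> ^ 2) * (max 1 L)\<^sup>2"
    by (simp add: P_def power2_eq_square power3_eq_cube)
  finally show "approxexp_cost S k \<epsilon> \<le> 87 * (real (length S) * real k ^ 3 / \<epsilon> ^ 2) * (max 1 L)\<^sup>2" .
qed simp

end
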